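(* Let $A$ be an invertible square rational matrix. Then $A$ is totally equimodular if and only if $(A^{-1})^\top$ is totally equimodular.
   Context: An $m\times n$ matrix is equimodular if it has full row rank $m$ and all its nonzero $m\times m$ minors have the same absolute value. A matrix is totally equimodular if every set of linearly independent rows of it forms an equimodular matrix. *)

theory Defs
  imports "Jordan_Normal_Form.DL_Submatrix" "Jordan_Normal_Form.Determinant"
begin

definition rows_lin_indep :: "rat mat \<Rightarrow> nat set \<Rightarrow> bool" where
  "rows_lin_indep M I \<longleftrightarrow> I \<subseteq> {..<dim_row M} \<and>
     (\<forall>c :: nat \<Rightarrow> rat. (\<forall>j<dim_col M. (\<Sum>i\<in>I. c i * M $$ (i, j)) = 0) \<longrightarrow> (\<forall>i\<in>I. c i = 0))"

definition equimodular :: "rat mat \<Rightarrow> bool" where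
  "equimodular M \<longleftrightarrow> rows_lin_indep M {..<dim_row M} \<and>
     (\<forall>J K. J \<subseteq> {..<dim_col M} \<and> K \<subseteq> {..<dim_col M} \<and>
            card J = dim_row M \<and> card K = dim_row M \<and>
            det (submatrix M UNIV J) \<noteq> 0 \<and> det (submatrix M UNIV K) \<noteq> 0 \<longrightarrow>
            \<bar>det (submatrix M UNIV J)\<bar> = \<bar>det (submatrix M UNIV K)\<bar>)"

definition totally_equimodular :: "rat mat \<Rightarrow> bool" where
  "totally_equimodular M \<longleftrightarrow>
     (\<forall>I. rows_lin_indep M I \<longrightarrow> equimodular (submatrix M I UNIV))"

end

theory Submission
  imports Defs
begin

(* Every row set of an invertible matrix is linearly independent, so for invertible A total
   equimodularity says: for each row set I, all nonzero minors of A with row set I have the same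
   absolute value. Jacobi's complementary minor identity
     |det A[I,J]| = |det A| * |det A^-1[J',I']|      (' = complement in {..<n})
   maps the minors of (A^-1)^T with rows I, via J |-> J', onto the minors of A with rows I',
   all scaled by the same nonzero factor |det A|. *)

lemma pick_eq_iff:
  assumes "m < card S" "m' < card S"
  shows "pick S m = pick S m' \<longleftrightarrow> m = m'"
  using pick_mono[of m' S m] pick_mono[of m S m'] assms
  by (metis less_irrefl linorder_neqE_nat)

lemma bij_betw_pick: "finite I \<Longrightarrow> bij_betw (pick I) {..<card I} I"
proof -
  assume fin: "finite I"
  have inj: "inj_on (pick I) {..<card I}" by (rule inj_onI) (use pick_eq_iff in auto)
  moreover have "pick I ` {..<card I} \<subseteq> I" using pick_in_set by auto
  moreover have "card (pick I ` {..<card I}) = card I" using card_image[OF inj] by simp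
  ultimately show ?thesis using card_subset_eq[OF fin] by (simp add: bij_betw_def)
qed

lemma submatrix_eq_mat:
  assumes "A \<in> carrier_mat m n" "I \<subseteq> {..<m}" "J \<subseteq> {..<n}"
  shows "submatrix A I J = mat (card I) (card J) (\<lambda>(i,j). A $$ (pick I i, pick J j))"
proof -
  have "{i. i < m \<and> i \<in> I} = I" "{j. j < n \<and> j \<in> J} = J" using assms by auto
  then show ?thesis using assms(1) by (simp add: submatrix_def)
qed

lemma submatrix_rows_eq_mat:
  assumes "A \<in> carrier_mat m n" "I \<subseteq> {..<m}"
  shows "submatrix A I UNIV = mat (card I) n (\<lambda>(i,j). A $$ (pick I i, j))"
proof -
  have "{i. i < m \<and> i \<in> I} = I" "{j. j < n \<and> j \<in> UNIV} = {..<n}" using assms by auto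
  then show ?thesis using assms(1) by (simp add: submatrix_def pick_UNIV)
qed

lemma submatrix_submatrix_rows: "submatrix (submatrix A I UNIV) UNIV J = submatrix A I J"
proof (rule eq_matI)
  fix i j assume "i < dim_row (submatrix A I J)" "j < dim_col (submatrix A I J)"
  then have i: "i < card {i. i < dim_row A \<and> i \<in> I}" and j: "j < card {j. j < dim_col A \<and> j \<in> J}"
    by (simp_all add: dim_submatrix)
  have "pick J j < dim_col A"
    using pick_le[of j "dim_col A" J] j by (simp add: conj_commute)
  then show "submatrix (submatrix A I UNIV) UNIV J $$ (i, j) = submatrix A I J $$ (i, j)"
    using i j by (simp add: submatrix_index dim_submatrix pick_UNIV)
qed (simp_all add: dim_submatrix)

lemma submatrix_transpose: "submatrix (transpose_mat A) I J = transpose_mat (submatrix A J I)"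
proof (rule eq_matI)
  fix i j assume "i < dim_row (transpose_mat (submatrix A J I))" "j < dim_col (transpose_mat (submatrix A J I))"
  then have i: "i < card {a. a < dim_col A \<and> a \<in> I}" and j: "j < card {a. a < dim_row A \<and> a \<in> J}"
    by (simp_all add: dim_submatrix)
  have "pick I i < dim_col A" "pick J j < dim_row A" using pick_le i j by blast+
  then show "submatrix (transpose_mat A) I J $$ (i, j) = transpose_mat (submatrix A J I) $$ (i, j)"
    using i j by (simp add: submatrix_index dim_submatrix)
qed (simp_all add: dim_submatrix)

lemma card_compl_lessThan: "I \<subseteq> {..<n} \<Longrightarrow> card ({..<n} - I) = n - card I"
  by (simp add: card_Diff_subset finite_subset)

definition split_perm :: "nat \<Rightarrow> nat set \<Rightarrow> nat \<Rightarrow> nat" where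
  "split_perm n I r =
     (if r < card I then pick I r else if r < n then pick ({..<n} - I) (r - card I) else r)"

lemma split_perm_mem:
  assumes I: "I \<subseteq> {..<n}" and r: "r < n"
  shows "split_perm n I r < n" and "split_perm n I r \<in> I \<longleftrightarrow> r < card I"
proof -
  have "split_perm n I r \<in> (if r < card I then I else {..<n} - I)"
  proof (cases "r < card I")
    case False
    then have "r - card I < card ({..<n} - I)" using r card_compl_lessThan[OF I] by simp
    then show ?thesis using False r pick_in_set[of "r - card I" "{..<n} - I"]
      by (simp add: split_perm_def)
  qed (simp add: split_perm_def pick_in_set)
  then show "split_perm n I r < n" and "split_perm n I r \<in> I \<longleftrightarrow> r < card I"
    using I by (auto split: if_splits)
qed

lemma split_perm_permutes:
  assumes I: "I \<subseteq> {..<n}"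
  shows "split_perm n I permutes {0..<n}"
proof -
  let ?p = "split_perm n I" and ?k = "card I"
  have inj: "inj_on ?p {0..<n}"
  proof (rule inj_onI)
    fix x y assume x: "x \<in> {0..<n}" and y: "y \<in> {0..<n}" and eq: "?p x = ?p y"
    then have "x < ?k \<longleftrightarrow> y < ?k"
      using split_perm_mem(2)[OF I, of x] split_perm_mem(2)[OF I, of y] by auto
    moreover have "card ({..<n} - I) = n - ?k" using card_compl_lessThan[OF I] .
    ultimately show "x = y"
      using x y eq pick_eq_iff[of x I y] pick_eq_iff[of "x - ?k" "{..<n} - I" "y - ?k"]
      by (cases "x < ?k") (auto simp: split_perm_def)
  qed
  then have "?p ` {0..<n} = {0..<n}"
    using split_perm_mem(1)[OF I] by (intro endo_inj_surj) auto
  with inj have "bij_betw ?p {0..<n} {0..<n}" by (simp add: bij_betw_def)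
  moreover have "?k \<le> n" using I by (metis card_lessThan card_mono finite_lessThan)
  ultimately show ?thesis by (intro bij_imp_permutes) (auto simp: split_perm_def)
qed

lemma det_identity_lower_right_block:
  fixes M :: "'a :: idom mat"
  assumes M: "M \<in> carrier_mat n n" and k: "k \<le> n"
    and unit: "\<And>r c. r < n \<Longrightarrow> k \<le> c \<Longrightarrow> c < n \<Longrightarrow> M $$ (r, c) = (if r = c then 1 else 0)"
  shows "det M = det (mat k k (\<lambda>(r, c). M $$ (r, c)))"
proof -
  let ?S = "mat k k (\<lambda>(r, c). M $$ (r, c))"
  have "M = four_block_mat ?S (0\<^sub>m k (n - k))
              (mat (n - k) k (\<lambda>(r, c). M $$ (r + k, c))) (1\<^sub>m (n - k))" (is "M = ?F")
    using M k unit by (intro eq_matI) auto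
  then have "det M = det ?F" by (rule arg_cong)
  also have "\<dots> = det ?S * det (1\<^sub>m (n - k) :: 'a mat)"
    by (rule det_four_block_mat_upper_right_zero) auto
  finally show ?thesis by simp
qed

lemma det_identity_upper_left_block:
  fixes M :: "'a :: idom mat"
  assumes M: "M \<in> carrier_mat n n" and k: "k \<le> n"
    and unit: "\<And>r c. r < n \<Longrightarrow> c < k \<Longrightarrow> M $$ (r, c) = (if r = c then 1 else 0)"
  shows "det M = det (mat (n - k) (n - k) (\<lambda>(r, c). M $$ (r + k, c + k)))"
proof -
  let ?S = "mat (n - k) (n - k) (\<lambda>(r, c). M $$ (r + k, c + k))"
  have "M = four_block_mat (1\<^sub>m k) (mat k (n - k) (\<lambda>(r, c). M $$ (r, c + k)))
              (0\<^sub>m (n - k) k) ?S" (is "M = ?F")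
    using M k unit by (intro eq_matI) auto
  then have "det M = det ?F" by (rule arg_cong)
  also have "\<dots> = det (1\<^sub>m k :: 'a mat) * det ?S"
    by (rule det_four_block_mat_lower_left_zero) auto
  finally show ?thesis by simp
qed

lemma abs_signof: "\<bar>signof p :: 'a :: linordered_idom\<bar> = 1"
  by (simp add: sign_def)

lemma jacobi_complementary_minor:
  fixes A B :: "'a :: linordered_idom mat"
  assumes A: "A \<in> carrier_mat n n" and B: "B \<in> carrier_mat n n" and AB: "A * B = 1\<^sub>m n"
    and I: "I \<subseteq> {..<n}" and J: "J \<subseteq> {..<n}" and card: "card I = card J"
  shows "\<bar>det (submatrix A I J)\<bar> = \<bar>det A\<bar> * \<bar>det (submatrix B ({..<n} - J) ({..<n} - I))\<bar>"
proof -
  define k where "k = card I"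
  define \<sigma> where "\<sigma> = split_perm n I"
  define \<tau> where "\<tau> = split_perm n J"
  have k: "k \<le> n" using I by (metis k_def card_lessThan card_mono finite_lessThan)
  have \<sigma>: "\<sigma> permutes {0..<n}" and \<tau>: "\<tau> permutes {0..<n}"
    using split_perm_permutes I J by (simp_all add: \<sigma>_def \<tau>_def)
  have \<sigma>_lt: "\<sigma> r < n" and \<tau>_lt: "\<tau> r < n" if "r < n" for r
    using that split_perm_mem(1) I J by (simp_all add: \<sigma>_def \<tau>_def)
  (* Columns c < k of Q are the unit vectors e (\<tau> c), the others are the columns \<sigma> c of B, so
     A * Q has the columns of A indexed by J and unit columns elsewhere. After permuting rows,
     both A * Q and Q are block triangular with an identity block, leaving the two minors. *)
  define Q where
    "Q = mat n n (\<lambda>(i, c). if c < k then (if i = \<tau> c then 1 else 0) else B $$ (i, \<sigma> c))"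
  have Q: "Q \<in> carrier_mat n n" by (simp add: Q_def)
  have AQ: "(A * Q) $$ (i, c) = (if c < k then A $$ (i, \<tau> c) else if i = \<sigma> c then 1 else 0)"
    if i: "i < n" and c: "c < n" for i c
  proof -
    have "col Q c = (if c < k then unit_vec n (\<tau> c) else col B (\<sigma> c))"
      using c B \<sigma>_lt by (auto simp: Q_def unit_vec_def)
    moreover have "(A * Q) $$ (i, c) = row A i \<bullet> col Q c" using i c A Q by simp
    moreover have "row A i \<bullet> col B (\<sigma> c) = (A * B) $$ (i, \<sigma> c)"
      using i c A B \<sigma>_lt by simp
    ultimately show ?thesis using i c A AB \<tau>_lt \<sigma>_lt by auto
  qed
  let ?R = "mat n n (\<lambda>(r, c). (A * Q) $$ (\<sigma> r, c))"
  have "?R $$ (r, c) = A $$ (pick I r, pick J c)" if r: "r < k" and c: "c < k" for r c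
  proof -
    have "pick I r < n" using r pick_in_set I by (auto simp: k_def)
    then show ?thesis using r c k card by (simp add: AQ \<sigma>_def \<tau>_def split_perm_def k_def)
  qed
  then have "mat k k (\<lambda>(r, c). ?R $$ (r, c)) = submatrix A I J"
    unfolding submatrix_eq_mat[OF A I J] using card by (intro cong_mat) (simp_all add: k_def)
  moreover have "det ?R = det (mat k k (\<lambda>(r, c). ?R $$ (r, c)))"
    by (rule det_identity_lower_right_block[OF _ k]) (auto simp: AQ \<sigma>_lt permutes_inj[OF \<sigma>] inj_eq)
  ultimately have AQ_minor: "det ?R = det (submatrix A I J)" by simp
  let ?S = "mat n n (\<lambda>(r, c). Q $$ (\<tau> r, c))"
  have "?S $$ (r + k, c + k) = B $$ (pick ({..<n} - J) r, pick ({..<n} - I) c)"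
    if r: "r < n - k" and c: "c < n - k" for r c
  proof -
    have "pick ({..<n} - J) r < n"
      using r pick_in_set[of r "{..<n} - J"] card_compl_lessThan[OF J] card by (auto simp: k_def)
    then show ?thesis using r c k card by (auto simp: Q_def \<sigma>_def \<tau>_def split_perm_def k_def)
  qed
  then have "mat (n - k) (n - k) (\<lambda>(r, c). ?S $$ (r + k, c + k))
      = submatrix B ({..<n} - J) ({..<n} - I)"
    unfolding submatrix_eq_mat[OF B Diff_subset Diff_subset]
    using card card_compl_lessThan[OF I] card_compl_lessThan[OF J]
    by (intro cong_mat) (simp_all add: k_def)
  moreover have "det ?S = det (mat (n - k) (n - k) (\<lambda>(r, c). ?S $$ (r + k, c + k)))"
    using k by (intro det_identity_upper_left_block) (auto simp: Q_def \<tau>_lt permutes_inj[OF \<tau>] inj_eq)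
  ultimately have Q_minor: "det ?S = det (submatrix B ({..<n} - J) ({..<n} - I))" by simp
  have "\<bar>det (submatrix A I J)\<bar> = \<bar>det (A * Q)\<bar>"
    using det_permute_rows[OF mult_carrier_mat[OF A Q] \<sigma>] AQ_minor by (simp add: abs_mult abs_signof)
  also have "\<dots> = \<bar>det A\<bar> * \<bar>det Q\<bar>" by (simp add: det_mult[OF A Q] abs_mult)
  also have "\<bar>det Q\<bar> = \<bar>det (submatrix B ({..<n} - J) ({..<n} - I))\<bar>"
    using det_permute_rows[OF Q \<tau>] Q_minor by (simp add: abs_mult abs_signof)
  finally show ?thesis .
qed

definition equimodular_rows :: "rat mat \<Rightarrow> nat set \<Rightarrow> bool" where
  "equimodular_rows M I \<longleftrightarrow> (\<forall>J K. J \<subseteq> {..<dim_col M} \<and> K \<subseteq> {..<dim_col M} \<and>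
     card J = card I \<and> card K = card I \<and>
     det (submatrix M I J) \<noteq> 0 \<and> det (submatrix M I K) \<noteq> 0 \<longrightarrow>
     \<bar>det (submatrix M I J)\<bar> = \<bar>det (submatrix M I K)\<bar>)"

lemma rows_lin_indep_submatrix_rows:
  assumes indep: "rows_lin_indep M I"
  shows "rows_lin_indep (submatrix M I UNIV) {..<card I}"
proof -
  let ?S = "submatrix M I UNIV"
  have I: "I \<subseteq> {..<dim_row M}" using indep by (simp add: rows_lin_indep_def)
  have S: "?S = mat (card I) (dim_col M) (\<lambda>(i, j). M $$ (pick I i, j))"
    using submatrix_rows_eq_mat[OF carrier_matI[OF refl refl] I] .
  have pick: "bij_betw (pick I) {..<card I} I"
    using bij_betw_pick I finite_subset by blast
  show ?thesis unfolding rows_lin_indep_def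
  proof (intro conjI allI impI ballI)
    fix c :: "nat \<Rightarrow> rat" and l
    assume zero: "\<forall>j<dim_col ?S. (\<Sum>i\<in>{..<card I}. c i * ?S $$ (i, j)) = 0"
      and l: "l \<in> {..<card I}"
    define c' where "c' x = c (card {a \<in> I. a < x})" for x
    have "(\<Sum>x\<in>I. c' x * M $$ (x, j)) = 0" if j: "j < dim_col M" for j
    proof -
      have "(\<Sum>x\<in>I. c' x * M $$ (x, j)) = (\<Sum>i\<in>{..<card I}. c' (pick I i) * M $$ (pick I i, j))"
        by (rule sum.reindex_bij_betw[OF pick, symmetric])
      also have "\<dots> = (\<Sum>i\<in>{..<card I}. c i * ?S $$ (i, j))"
        using j by (intro sum.cong) (simp_all add: S c'_def card_pick)
      finally show ?thesis using zero j by (simp add: S)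
    qed
    then have "c' (pick I l) = 0"
      using indep l pick_in_set by (simp add: rows_lin_indep_def)
    then show "c l = 0" using l by (simp add: c'_def card_pick)
  qed (simp add: S)
qed

lemma equimodular_submatrix_rows_iff:
  assumes "rows_lin_indep M I"
  shows "equimodular (submatrix M I UNIV) \<longleftrightarrow> equimodular_rows M I"
proof -
  have "I \<subseteq> {..<dim_row M}" using assms by (simp add: rows_lin_indep_def)
  then have "submatrix M I UNIV = mat (card I) (dim_col M) (\<lambda>(i, j). M $$ (pick I i, j))"
    by (rule submatrix_rows_eq_mat[OF carrier_matI[OF refl refl]])
  then have "dim_row (submatrix M I UNIV) = card I" "dim_col (submatrix M I UNIV) = dim_col M"
    by simp_all
  then show ?thesis
    using rows_lin_indep_submatrix_rows[OF assms]
    by (simp add: equimodular_def equimodular_rows_def submatrix_submatrix_rows)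
qed

lemma totally_equimodular_iff:
  "totally_equimodular M \<longleftrightarrow> (\<forall>I. rows_lin_indep M I \<longrightarrow> equimodular_rows M I)"
  by (simp add: totally_equimodular_def equimodular_submatrix_rows_iff)

lemma rows_lin_indep_right_invertible:
  assumes X: "X \<in> carrier_mat n n" and Y: "Y \<in> carrier_mat n n" and XY: "X * Y = 1\<^sub>m n"
  shows "rows_lin_indep X I \<longleftrightarrow> I \<subseteq> {..<n}"
proof
  assume "rows_lin_indep X I" then show "I \<subseteq> {..<n}" using X by (simp add: rows_lin_indep_def)
next
  assume I: "I \<subseteq> {..<n}"
  have fin: "finite I" using I finite_subset by blast
  show "rows_lin_indep X I" unfolding rows_lin_indep_def
  proof (intro conjI allI impI ballI)
    show "I \<subseteq> {..<dim_row X}" using I X by simp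
    fix c :: "nat \<Rightarrow> rat" and l
    assume zero: "\<forall>j<dim_col X. (\<Sum>i\<in>I. c i * X $$ (i, j)) = 0" and l: "l \<in> I"
    have ln: "l < n" using l I by auto
    have "(\<Sum>i\<in>I. c i * (X * Y) $$ (i, l)) = (\<Sum>i\<in>I. if i = l then c i else 0)"
      using XY I ln by (intro sum.cong) auto
    then have "c l = (\<Sum>i\<in>I. c i * (X * Y) $$ (i, l))" using l fin by simp
    also have "\<dots> = (\<Sum>i\<in>I. \<Sum>j\<in>{0..<n}. c i * X $$ (i, j) * Y $$ (j, l))"
      using X Y I ln by (intro sum.cong) (auto simp: scalar_prod_def sum_distrib_left mult.assoc)
    also have "\<dots> = (\<Sum>j\<in>{0..<n}. (\<Sum>i\<in>I. c i * X $$ (i, j)) * Y $$ (j, l))"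
      by (subst sum.swap) (simp add: sum_distrib_right)
    also have "\<dots> = 0" using zero X by simp
    finally show "c l = 0" .
  qed
qed

lemma equimodular_rows_inverse_transpose:
  assumes A: "A \<in> carrier_mat n n" and B: "B \<in> carrier_mat n n" and AB: "A * B = 1\<^sub>m n"
    and I: "I \<subseteq> {..<n}" and equi: "equimodular_rows A ({..<n} - I)"
  shows "equimodular_rows (transpose_mat B) I"
proof -
  have "det A * det B = 1" using det_mult[OF A B] AB by simp
  then have det_A: "det A \<noteq> 0" by auto
  have minor: "\<bar>det (submatrix A ({..<n} - I) ({..<n} - L))\<bar>
      = \<bar>det A\<bar> * \<bar>det (submatrix (transpose_mat B) I L)\<bar>"
    if L: "L \<subseteq> {..<n}" and card: "card L = card I" for L
  proof -
    have "{..<n} - ({..<n} - X) = X" if "X \<subseteq> {..<n}" for X using that by auto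
    moreover have "card ({..<n} - I) = card ({..<n} - L)"
      using card card_compl_lessThan[OF I] card_compl_lessThan[OF L] by simp
    moreover have "submatrix B L I \<in> carrier_mat (card L) (card L)"
      using submatrix_eq_mat[OF B L I] card by simp
    ultimately show ?thesis
      using jacobi_complementary_minor[OF A B AB Diff_subset Diff_subset] I L
      by (simp add: submatrix_transpose det_transpose)
  qed
  show ?thesis unfolding equimodular_rows_def
  proof (intro allI impI, elim conjE)
    fix J K assume "J \<subseteq> {..<dim_col (transpose_mat B)}" "K \<subseteq> {..<dim_col (transpose_mat B)}"
      and card: "card J = card I" "card K = card I"
      and nonzero: "det (submatrix (transpose_mat B) I J) \<noteq> 0" "det (submatrix (transpose_mat B) I K) \<noteq> 0"
    then have J: "J \<subseteq> {..<n}" and K: "K \<subseteq> {..<n}" using B by simp_all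
    let ?Ic = "{..<n} - I"
    have "card ({..<n} - J) = card ?Ic" "card ({..<n} - K) = card ?Ic"
      using card card_compl_lessThan[OF I] card_compl_lessThan[OF J] card_compl_lessThan[OF K]
      by simp_all
    moreover have "det (submatrix A ?Ic ({..<n} - J)) \<noteq> 0" "det (submatrix A ?Ic ({..<n} - K)) \<noteq> 0"
      using minor[OF J card(1)] minor[OF K card(2)] nonzero det_A by auto
    ultimately have "\<bar>det (submatrix A ?Ic ({..<n} - J))\<bar> = \<bar>det (submatrix A ?Ic ({..<n} - K))\<bar>"
      using equi A unfolding equimodular_rows_def by (metis Diff_subset carrier_matD(2))
    then show "\<bar>det (submatrix (transpose_mat B) I J)\<bar> = \<bar>det (submatrix (transpose_mat B) I K)\<bar>"
      using minor[OF J card(1)] minor[OF K card(2)] det_A by simp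
  qed
qed

lemma totally_equimodular_inverse_transpose:
  assumes A: "A \<in> carrier_mat n n" and B: "B \<in> carrier_mat n n" and AB: "A * B = 1\<^sub>m n"
    and "totally_equimodular A"
  shows "totally_equimodular (transpose_mat B)"
proof -
  have "transpose_mat B * transpose_mat A = 1\<^sub>m n" using transpose_mult[OF A B] AB by simp
  then have "rows_lin_indep (transpose_mat B) I \<longleftrightarrow> I \<subseteq> {..<n}" for I
    using A B by (intro rows_lin_indep_right_invertible) auto
  moreover have "equimodular_rows A ({..<n} - I)" for I
    using assms(4) rows_lin_indep_right_invertible[OF A B AB]
    by (simp add: totally_equimodular_iff)
  ultimately show ?thesis
    using equimodular_rows_inverse_transpose[OF A B AB] by (simp add: totally_equimodular_iff)
qed

theorem mainTheorem2:
  fixes A B :: "rat mat" and n :: nat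
  assumes "A \<in> carrier_mat n n" and "B \<in> carrier_mat n n"
    and "A * B = 1\<^sub>m n" and "B * A = 1\<^sub>m n"
  shows "totally_equimodular A \<longleftrightarrow> totally_equimodular (transpose_mat B)"
  \<comment> \<open>For square matrices \<open>B * A = 1\<^sub>m n\<close> follows from \<open>A * B = 1\<^sub>m n\<close>.\<close>
proof
  show "totally_equimodular A \<Longrightarrow> totally_equimodular (transpose_mat B)"
    using totally_equimodular_inverse_transpose assms(1-3) .
next
  have "transpose_mat B * transpose_mat A = 1\<^sub>m n"
    using transpose_mult[OF assms(1,2)] assms(3) by simp
  then show "totally_equimodular (transpose_mat B) \<Longrightarrow> totally_equimodular A"
    using totally_equimodular_inverse_transpose[of "transpose_mat B" n "transpose_mat A"] assms(1,2)
    by simp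
qed

end
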